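(* Let $a$ and $q \geq 1$ be integers with $\gcd(a,q) = 1$. Let $n, k, L$ be positive integers and $N \geq 1$ a real number such that $$L \leq N^n, \qquad q \leq L N^k, \qquad 2^{n+k+1} < N.$$ Let $\mathcal{P}$ be the set of primes in $[N/2, N]$ not dividing $q$. Then $$\sum_{l = 1}^{L} \left| \sum_{q_1 \in \mathcal{P}} \cdots \sum_{q_n \in \mathcal{P}} e\!\left(\frac{l\, q_1 \cdots q_n\, a}{q}\right) \right| \leq C\, 2^{n+k} n^n \max\!\left(L N^{n/2 + k/2},\ \frac{L N^n}{q^{1/2}}\right),$$ where $C>0$ is an absolute constant.
   Context: $e(x) := e^{2\pi i x}$. *)

theory Defs
  imports "HOL-Analysis.Analysis"
begin

definition e :: "real \<Rightarrow> complex" where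
  "e x = exp (2 * of_real pi * \<i> * of_real x)"

end

theory Submission
  imports Defs
begin

(*
  For k \<ge> n the trivial bound A \<le> L N^n suffices.
  For k < n every n-tuple of primes splits into its first k entries y and its last
  j = n - k entries x, so the inner sum is \<Sum>_y T(l y_1\<cdots>y_k) with the character sum
  T(m) = \<Sum>_x e(m x_1\<cdots>x_j a / q).  Then:
   (1) by Cauchy-Schwarz over the pairs (l, y), grouped by the value m = l y_1\<cdots>y_k \<le> L N^k,
       A^2 is at most L N^k times (2(n+k))^k times \<Sum>_{m \<le> L N^k} |T m|^2, because a number
       m \<le> N^(n+k) has at most 2(n+k) distinct prime factors \<ge> N/2;
   (2) T is q-periodic, so that sum is at most (L N^k/q + 1) \<Sum>_{m<q} |T m|^2;
   (3) by orthogonality of additive characters (gcd(a,q) = 1), \<Sum>_{m<q} |T m|^2 is q times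
       the number of pairs (x, x') with congruent products mod q, counted by the same
       divisor argument.
*)

lemma e_add_int: "e (x + of_int j) = e x"
proof -
  have "2 * of_real pi * \<i> * of_real (x + of_int j)
        = 2 * of_real pi * \<i> * of_real x + \<i> * (of_int j * (of_real pi * 2))"
    by (simp add: algebra_simps)
  then show ?thesis unfolding e_def by (simp only: exp_plus_2pin)
qed

lemma e_int: "e (of_int j) = 1"
  using e_add_int[of 0 j] by (simp add: e_def)

lemma e_mult_nat: "e (of_nat m * x) = e x ^ m"
  unfolding e_def by (simp add: exp_of_nat_mult[symmetric] algebra_simps)

lemma e_diff: "e x * cnj (e y) = e (x - y)"
proof -
  have "cnj (e y) = exp (- (2 * of_real pi * \<i> * of_real y))"
    unfolding e_def by (simp add: exp_cnj)
  then show ?thesis unfolding e_def by (simp add: exp_add[symmetric] algebra_simps)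
qed

lemma norm_e: "norm (e x) = 1"
  unfolding e_def by (simp add: norm_exp)

lemma e_eq_1_iff: "e x = 1 \<longleftrightarrow> x \<in> \<int>"
proof -
  have "e x = 1 \<longleftrightarrow> (\<exists>n::int. 2 * pi * x = of_int (2 * n) * pi)"
    unfolding e_def exp_eq_1 by simp
  also have "\<dots> \<longleftrightarrow> (\<exists>n::int. x = of_int n)" by auto
  also have "\<dots> \<longleftrightarrow> x \<in> \<int>" by (auto elim: Ints_cases)
  finally show ?thesis .
qed

lemma sum_e_period:
  fixes qn :: nat and d :: int
  assumes "qn > 0"
  shows "(\<Sum>m<qn. e (real m * d / qn)) = (if int qn dvd d then of_nat qn else 0)"
proof (cases "int qn dvd d")
  case True
  then obtain c where c: "d = int qn * c" by auto
  have "e (real m * d / qn) = 1" for m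
    using assms c e_int[of "int m * c"] by (simp add: field_simps)
  then show ?thesis using True by simp
next
  case False
  define w where "w = e (d / qn)"
  have w1: "w \<noteq> 1"
  proof
    assume "w = 1"
    then have "real_of_int d / real qn \<in> \<int>" unfolding w_def e_eq_1_iff .
    then obtain c where "real_of_int d / real qn = of_int c" by (auto elim: Ints_cases)
    then have "d = int qn * c" using assms
      by (simp add: field_simps) (metis of_int_eq_iff of_int_mult of_int_of_nat_eq)
    then show False using False by auto
  qed
  have wq: "w ^ qn = 1"
    unfolding w_def using e_mult_nat[of qn "d / qn"] e_int[of d] assms by simp
  have "(\<Sum>m<qn. e (real m * d / qn)) = (\<Sum>m<qn. w ^ m)"
    unfolding w_def by (intro sum.cong refl) (simp add: e_mult_nat[symmetric])
  also have "\<dots> = 0" using w1 wq by (simp add: sum_gp_strict)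
  finally show ?thesis using False by simp
qed

lemma bij_betw_merge:
  assumes "I \<inter> J = {}"
  shows "bij_betw (merge I J) (PiE I B \<times> PiE J B) (PiE (I \<union> J) B)"
proof (rule bij_betw_byWitness[where f' = "\<lambda>f. (restrict f I, restrict f J)"])
  show "\<forall>a\<in>PiE I B \<times> PiE J B. (restrict (merge I J a) I, restrict (merge I J a) J) = a"
    using assms
    by (auto simp del: restrict_merge simp add: restrict_merge(1,2)[OF assms] PiE_restrict)
  show "\<forall>f\<in>PiE (I \<union> J) B. merge I J (restrict f I, restrict f J) = f"
  proof
    fix f assume f: "f \<in> PiE (I \<union> J) B"
    show "merge I J (restrict f I, restrict f J) = f"
    proof
      fix i show "merge I J (restrict f I, restrict f J) i = f i"
        using PiE_arb[OF f, of i] by (simp add: merge_def)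
    qed
  qed
  show "merge I J ` (PiE I B \<times> PiE J B) \<subseteq> PiE (I \<union> J) B"
    using assms by (auto simp del: PiE_cancel_merge simp: PiE_iff merge_def)
  show "(\<lambda>f. (restrict f I, restrict f J)) ` PiE (I \<union> J) B \<subseteq> PiE I B \<times> PiE J B"
    by auto
qed

lemma sum_PiE_merge:
  assumes "I \<inter> J = {}"
  shows "(\<Sum>f\<in>PiE (I \<union> J) B. g f) = (\<Sum>y\<in>PiE I B. \<Sum>x\<in>PiE J B. g (merge I J (y, x)))"
proof -
  have "(\<Sum>f\<in>PiE (I \<union> J) B. g f) = (\<Sum>u\<in>PiE I B \<times> PiE J B. g (merge I J u))"
    using sum.reindex_bij_betw[OF bij_betw_merge[OF assms], of g] by simp
  also have "\<dots> = (\<Sum>y\<in>PiE I B. \<Sum>x\<in>PiE J B. g (merge I J (y, x)))"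
    by (simp add: sum.cartesian_product split_def)
  finally show ?thesis .
qed

lemma prod_merge:
  fixes y x :: "'i \<Rightarrow> 'a::comm_monoid_mult"
  assumes "I \<inter> J = {}" "finite I" "finite J"
  shows "(\<Prod>i\<in>I \<union> J. merge I J (y, x) i) = (\<Prod>i\<in>I. y i) * (\<Prod>i\<in>J. x i)"
  using assms by (simp add: prod.union_disjoint)

lemma prime_tuple_prod_range:
  fixes t :: "'i \<Rightarrow> nat"
  assumes "t \<in> PiE I (\<lambda>_. P)" and P: "\<And>p. p \<in> P \<Longrightarrow> prime p \<and> p \<le> Nf"
  shows "1 \<le> (\<Prod>i\<in>I. t i)" and "(\<Prod>i\<in>I. t i) \<le> Nf ^ card I"
proof -
  have t: "prime (t i) \<and> t i \<le> Nf" if "i \<in> I" for i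
    using P PiE_mem[OF assms(1) that] by blast
  show "1 \<le> (\<Prod>i\<in>I. t i)"
    using t by (intro prod_ge_1) (simp add: Suc_le_eq prime_gt_0_nat)
  have "(\<Prod>i\<in>I. t i) \<le> (\<Prod>i\<in>I. Nf)"
    using t by (intro prod_mono) simp
  then show "(\<Prod>i\<in>I. t i) \<le> Nf ^ card I" by simp
qed

lemma prod_distinct_primes_dvd:
  fixes Q :: "nat set"
  assumes "finite Q" "\<And>p. p \<in> Q \<Longrightarrow> prime p \<and> p dvd v"
  shows "(\<Prod>p\<in>Q. p) dvd v"
  using assms
proof (induction Q rule: finite_induct)
  case empty then show ?case by simp
next
  case (insert a F)
  have "coprime a (\<Prod>p\<in>F. p)"
  proof (rule prime_imp_coprime)
    show "prime a" using insert by auto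
    show "\<not> a dvd (\<Prod>p\<in>F. p)"
    proof
      assume "a dvd (\<Prod>p\<in>F. p)"
      then obtain x where "x \<in> F" "a dvd x"
        using insert \<open>prime a\<close> by (auto simp: prime_dvd_prod_iff)
      then have "a = x" using insert by (metis insertCI primes_dvd_imp_eq)
      then show False using insert \<open>x \<in> F\<close> by auto
    qed
  qed
  then show ?case using insert by (simp add: divides_mult)
qed

(* The divisor bound: a number v \<le> N^D has at most 2D distinct prime factors \<ge> N/2, so at
   most (2D)^|I| tuples of such primes have a product dividing v. *)
lemma card_dvd_tuples:
  fixes P :: "nat set" and N :: real and v D :: nat
  assumes P: "\<And>p. p \<in> P \<Longrightarrow> prime p \<and> N / 2 \<le> real p"
    and N4: "N \<ge> 4" and v: "v > 0" "real v \<le> N ^ D" and I: "finite I"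
  shows "card {t \<in> PiE I (\<lambda>_. P). (\<Prod>i\<in>I. t i) dvd v} \<le> (2 * D) ^ card I"
proof -
  define Q where "Q = {p\<in>P. p dvd v}"
  have "Q \<subseteq> {..v}" unfolding Q_def using v by (auto dest: dvd_imp_le)
  then have fQ: "finite Q" by (rule finite_subset) simp
  have sub: "{t \<in> PiE I (\<lambda>_. P). (\<Prod>i\<in>I. t i) dvd v} \<subseteq> PiE I (\<lambda>_. Q)"
  proof
    fix t assume "t \<in> {t \<in> PiE I (\<lambda>_. P). (\<Prod>i\<in>I. t i) dvd v}"
    then have tP: "t \<in> PiE I (\<lambda>_. P)" and dv: "(\<Prod>i\<in>I. t i) dvd v" by simp_all
    have "t i \<in> Q" if "i \<in> I" for i
    proof -
      have "t i dvd v" using dvd_prodI[OF I that] dv by (rule dvd_trans)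
      then show ?thesis using PiE_mem[OF tP that] unfolding Q_def by simp
    qed
    then show "t \<in> PiE I (\<lambda>_. Q)" using tP by (simp add: PiE_iff)
  qed
  have cQ: "card Q \<le> 2 * D"
  proof (rule ccontr)
    assume "\<not> card Q \<le> 2 * D"
    then have cq: "card Q \<ge> 2 * D + 1" by simp
    have "(\<Prod>p\<in>Q. p) dvd v" using fQ by (intro prod_distinct_primes_dvd) (auto simp: Q_def P)
    then have "(\<Prod>p\<in>Q. p) \<le> v" using v(1) by (rule dvd_imp_le)
    then have le: "(\<Prod>p\<in>Q. real p) \<le> real v" by (simp only: of_nat_prod[symmetric] of_nat_le_iff)
    have "(N/2) ^ card Q = (\<Prod>p\<in>Q. N/2)" by simp
    also have "\<dots> \<le> (\<Prod>p\<in>Q. real p)"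
      using N4 P by (intro prod_mono) (fastforce simp: Q_def)+
    finally have Qv: "(N/2) ^ card Q \<le> real v" using le by linarith
    have "(N/2) ^ (2*D+1) \<le> (N/2) ^ card Q"
      using N4 cq by (intro power_increasing) auto
    moreover have "(N/2)^(2*D+1) = ((N/2)^2)^D * (N/2)" by (simp add: power_mult)
    moreover have "N ^ D * 2 \<le> ((N/2)^2)^D * (N/2)"
    proof (rule mult_mono)
      show "N ^ D \<le> ((N/2)^2)^D"
        using N4 by (intro power_mono) (auto simp: power2_eq_square)
    qed (use N4 in auto)
    moreover have "N ^ D > 0" using N4 by simp
    ultimately show False using v(2) Qv by linarith
  qed
  have "card {t \<in> PiE I (\<lambda>_. P). (\<Prod>i\<in>I. t i) dvd v} \<le> card (PiE I (\<lambda>_. Q))"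
    using sub I fQ by (intro card_mono finite_PiE) auto
  also have "\<dots> = card Q ^ card I" using I by (simp add: card_PiE)
  also have "\<dots> \<le> (2 * D) ^ card I" using cQ by (intro power_mono) auto
  finally show ?thesis .
qed

lemma card_residue_le:
  fixes qn B c :: nat
  assumes "qn > 0"
  shows "card {v\<in>{1..B}. v mod qn = c} \<le> B div qn + 1"
proof -
  have "inj_on (\<lambda>v. v div qn) {v\<in>{1..B}. v mod qn = c}"
    by (intro inj_onI) (metis (mono_tags, lifting) mem_Collect_eq div_mult_mod_eq)
  moreover have "(\<lambda>v. v div qn) ` {v\<in>{1..B}. v mod qn = c} \<subseteq> {..B div qn}"
    by (auto intro: div_le_mono)
  ultimately have "card {v\<in>{1..B}. v mod qn = c} \<le> card {..B div qn}"
    by (metis card_image card_mono finite_atMost)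
  then show ?thesis by simp
qed

lemma periodic_block:
  fixes g :: "nat \<Rightarrow> real"
  assumes per: "\<And>m. g (m + qn) = g m"
  shows "(\<Sum>m<c * qn. g m) = real c * (\<Sum>m<qn. g m)"
proof (induction c)
  case 0 then show ?case by simp
next
  case (Suc c)
  have shift: "g (m + c * qn) = g m" for m
  proof (induction c)
    case (Suc c)
    have "m + Suc c * qn = (m + c * qn) + qn" by simp
    then show ?case using Suc per by metis
  qed simp
  have "(\<Sum>m<Suc c * qn. g m) = (\<Sum>m<c * qn. g m) + (\<Sum>m\<in>{c*qn..<c*qn+qn}. g m)"
    by (simp add: sum.atLeastLessThan_concat[symmetric] lessThan_atLeast0 add.commute)
  also have "(\<Sum>m\<in>{c*qn..<c*qn+qn}. g m) = (\<Sum>m<qn. g (m + c*qn))"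
    by (simp add: sum.shift_bounds_nat_ivl[of g 0 "c*qn" qn, simplified] lessThan_atLeast0 add.commute)
  also have "\<dots> = (\<Sum>m<qn. g m)" by (simp add: shift)
  finally show ?case using Suc by (simp add: algebra_simps)
qed

lemma periodic_sum_le:
  fixes g :: "nat \<Rightarrow> real"
  assumes per: "\<And>m. g (m + qn) = g m" and nn: "\<And>m. g m \<ge> 0" and q: "qn > 0"
  shows "(\<Sum>m\<in>{1..M}. g m) \<le> real (M div qn + 1) * (\<Sum>m<qn. g m)"
proof -
  have "M < (M div qn + 1) * qn" using q
    by (metis div_mult_mod_eq add_less_cancel_left mod_less_divisor distrib_right mult_1
        add.commute mult.commute)
  then have "{1..M} \<subseteq> {..<(M div qn + 1) * qn}" by auto
  then have "(\<Sum>m\<in>{1..M}. g m) \<le> (\<Sum>m<(M div qn + 1) * qn. g m)"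
    by (intro sum_mono2) (auto simp: nn)
  also have "\<dots> = real (M div qn + 1) * (\<Sum>m<qn. g m)"
    using periodic_block[of g qn] per by blast
  finally show ?thesis .
qed

lemma sum_fiber_le:
  fixes g :: "nat \<Rightarrow> real" and f :: "'z \<Rightarrow> nat"
  assumes "finite Z" "finite S" "f ` Z \<subseteq> S" "\<And>m. g m \<ge> 0"
    and fib: "\<And>m. m \<in> S \<Longrightarrow> card {z\<in>Z. f z = m} \<le> F"
  shows "(\<Sum>z\<in>Z. g (f z)) \<le> real F * (\<Sum>m\<in>S. g m)"
proof -
  have "(\<Sum>z\<in>Z. g (f z)) = (\<Sum>m\<in>f ` Z. \<Sum>z\<in>{z\<in>Z. f z = m}. g (f z))"
    using assms(1) by (rule sum.image_gen)
  also have "\<dots> = (\<Sum>m\<in>f ` Z. real (card {z\<in>Z. f z = m}) * g m)"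
    by (intro sum.cong refl) simp
  also have "\<dots> \<le> (\<Sum>m\<in>f ` Z. real F * g m)"
    using assms by (intro sum_mono mult_right_mono) auto
  also have "\<dots> \<le> (\<Sum>m\<in>S. real F * g m)"
    using assms by (intro sum_mono2) auto
  finally show ?thesis by (simp add: sum_distrib_left)
qed

lemma sum_periodic_cauchy_schwarz:
  fixes h :: "nat \<Rightarrow> real" and f :: "'z \<Rightarrow> nat"
  assumes fZ: "finite Z" and range: "f ` Z \<subseteq> {1..M}"
    and fib: "\<And>m. m \<in> {1..M} \<Longrightarrow> card {z\<in>Z. f z = m} \<le> F"
    and per: "\<And>m. h (m + qn) = h m" and q: "qn > 0"
  shows "(\<Sum>z\<in>Z. h (f z))^2 \<le> real (card Z) * real F * real (M div qn + 1) * (\<Sum>m<qn. (h m)^2)"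
proof -
  define V0 where "V0 = (\<Sum>m<qn. (h m)^2)"
  have CS: "(\<Sum>z\<in>Z. h (f z))^2 \<le> (\<Sum>z\<in>Z. (h (f z))^2) * real (card Z)"
    by (rule sum_squared_le_sum_of_squares)
  have fibres: "(\<Sum>z\<in>Z. (h (f z))^2) \<le> real F * (\<Sum>m\<in>{1..M}. (h m)^2)"
    by (rule sum_fiber_le[OF fZ _ range _ fib]) auto
  have periods: "(\<Sum>m\<in>{1..M}. (h m)^2) \<le> real (M div qn + 1) * V0"
    unfolding V0_def by (rule periodic_sum_le[OF _ _ q]) (simp_all add: per)
  have "(\<Sum>z\<in>Z. (h (f z))^2) \<le> real F * (real (M div qn + 1) * V0)"
    using fibres periods by (meson order_trans mult_left_mono of_nat_0_le_iff)
  then have "(\<Sum>z\<in>Z. (h (f z))^2) * real (card Z) \<le> real F * (real (M div qn + 1) * V0) * real (card Z)"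
    by (rule mult_right_mono) simp
  with CS show ?thesis unfolding V0_def by (simp add: algebra_simps)
qed

definition prod_char_sum :: "int \<Rightarrow> int \<Rightarrow> ('i \<Rightarrow> nat) set \<Rightarrow> 'i set \<Rightarrow> nat \<Rightarrow> complex" where
  "prod_char_sum a q X J m = (\<Sum>x\<in>X. e (real_of_int (int m * int (\<Prod>i\<in>J. x i) * a) / real_of_int q))"

lemma prod_char_sum_periodic:
  fixes qn :: nat
  assumes "qn > 0"
  shows "prod_char_sum a (int qn) X J (m + qn) = prod_char_sum a (int qn) X J m"
  unfolding prod_char_sum_def
proof (intro sum.cong refl)
  fix x
  define u where "u = int (\<Prod>i\<in>J. x i)"
  have "real_of_int (int (m + qn) * u * a) / real_of_int (int qn)
        = real_of_int (int m * u * a) / real_of_int (int qn) + of_int (u * a)"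
    using assms by (simp add: field_simps)
  then show "e (real_of_int (int (m + qn) * int (\<Prod>i\<in>J. x i) * a) / real_of_int (int qn)) =
             e (real_of_int (int m * int (\<Prod>i\<in>J. x i) * a) / real_of_int (int qn))"
    unfolding u_def[symmetric] by (simp only: e_add_int)
qed

(* Mean square over a period: \<Sum>_{m<q} |T m|^2 = q \<cdot> #{(x, x') : x_J \<equiv> x'_J (mod q)}, by
   expanding the square and applying orthogonality (a is invertible mod q). *)
lemma prod_char_sum_mean_square:
  fixes qn :: nat and X :: "('i \<Rightarrow> nat) set" and J :: "'i set"
  assumes q: "qn > 0" and cop: "coprime a (int qn)" and fX: "finite X"
  shows "(\<Sum>m<qn. (norm (prod_char_sum a (int qn) X J m))^2)
         = real qn * real (card {(x, x'). x \<in> X \<and> x' \<in> X \<and>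
                                  (\<Prod>i\<in>J. x i) mod qn = (\<Prod>i\<in>J. x' i) mod qn})"
proof -
  define px where "px x = (\<Prod>i\<in>J. x i)" for x :: "'i \<Rightarrow> nat"
  define th where "th m x = real_of_int (int m * int (px x) * a) / real_of_int (int qn)" for m :: nat and x
  define d where "d x x' = (int (px x) - int (px x')) * a" for x x'
  define T where "T m = prod_char_sum a (int qn) X J m" for m
  define R where "R = {(x, x'). x \<in> X \<and> x' \<in> X \<and> px x mod qn = px x' mod qn}"
  have T_th: "T m = (\<Sum>x\<in>X. e (th m x))" for m
    unfolding T_def prod_char_sum_def th_def px_def ..
  have th_diff: "th m x - th m x' = real m * real_of_int (d x x') / real qn" for m x x'
    unfolding th_def d_def using q by (simp add: field_simps)
  have dvd_d: "int qn dvd d x x' \<longleftrightarrow> px x mod qn = px x' mod qn" for x x'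
  proof -
    have "int qn dvd d x x' \<longleftrightarrow> int qn dvd (int (px x) - int (px x'))"
      unfolding d_def using cop by (simp add: coprime_dvd_mult_left_iff coprime_commute)
    also have "\<dots> \<longleftrightarrow> px x mod qn = px x' mod qn"
      by (metis mod_eq_dvd_iff of_nat_eq_iff zmod_int)
    finally show ?thesis .
  qed
  have "complex_of_real (\<Sum>m<qn. (norm (T m))^2) = (\<Sum>m<qn. T m * cnj (T m))"
    by (simp only: of_real_sum complex_norm_square)
  also have "\<dots> = (\<Sum>m<qn. \<Sum>x\<in>X. \<Sum>x'\<in>X. e (real m * real_of_int (d x x') / real qn))"
    by (simp add: T_th sum_product e_diff th_diff)
  also have "\<dots> = (\<Sum>x\<in>X. \<Sum>x'\<in>X. \<Sum>m<qn. e (real m * real_of_int (d x x') / real qn))"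
    by (simp add: sum.swap[of _ "{..<qn}"])
  also have "\<dots> = (\<Sum>x\<in>X. \<Sum>x'\<in>X. if px x mod qn = px x' mod qn then of_nat qn else 0)"
    by (simp add: sum_e_period[OF q] dvd_d)
  also have "\<dots> = (\<Sum>z\<in>X \<times> X. if px (fst z) mod qn = px (snd z) mod qn then of_nat qn else 0)"
    by (simp add: sum.cartesian_product split_def)
  also have "\<dots> = (\<Sum>z\<in>R. of_nat qn)"
  proof -
    have "R = {z \<in> X \<times> X. px (fst z) mod qn = px (snd z) mod qn}" unfolding R_def by auto
    then show ?thesis
      using sum.inter_filter[of "X \<times> X" "\<lambda>_. of_nat qn :: complex"
          "\<lambda>z. px (fst z) mod qn = px (snd z) mod qn"] fX
      by simp
  qed
  also have "\<dots> = complex_of_real (real qn * real (card R))" by simp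
  finally show ?thesis unfolding R_def px_def T_def by (simp only: of_real_eq_iff)
qed

(* Prime tuples in a residue class: their products lie in [1, Nf^|J|]; a residue class
   meets this interval in at most Nf^|J| div q + 1 numbers v, and each v is a multiple of
   the products of at most (2D)^|J| tuples. *)
lemma card_tuples_in_residue_class:
  fixes P :: "nat set" and N :: real and Nf qn D c :: nat and J :: "'i set"
  assumes P: "\<And>p. p \<in> P \<Longrightarrow> prime p \<and> N / 2 \<le> real p \<and> p \<le> Nf"
    and N4: "N \<ge> 4" and NfN: "real Nf \<le> N" and J: "finite J" and JD: "card J \<le> D"
    and q: "qn > 0"
  defines "X \<equiv> PiE J (\<lambda>_. P)"
  shows "card {x\<in>X. (\<Prod>i\<in>J. x i) mod qn = c} \<le> (Nf ^ card J div qn + 1) * (2 * D) ^ card J"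
proof -
  define px where "px x = (\<Prod>i\<in>J. x i)" for x :: "'i \<Rightarrow> nat"
  define V where "V = {v\<in>{1..Nf ^ card J}. v mod qn = c}"
  have "P \<subseteq> {..Nf}" using P by auto
  then have fX: "finite X" unfolding X_def using J by (intro finite_PiE) (auto intro: finite_subset)
  have fV: "finite V" unfolding V_def by simp
  have px_range: "px x \<in> {1..Nf ^ card J}" if "x \<in> X" for x
    using prime_tuple_prod_range[of x J P Nf] that P unfolding X_def px_def by auto
  have "{x\<in>X. px x mod qn = c} \<subseteq> (\<Union>v\<in>V. {t\<in>X. px t dvd v})"
    using px_range unfolding V_def by fastforce
  then have "card {x\<in>X. px x mod qn = c} \<le> card (\<Union>v\<in>V. {t\<in>X. px t dvd v})"
    using fV fX by (intro card_mono) auto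
  also have "\<dots> \<le> (\<Sum>v\<in>V. card {t\<in>X. px t dvd v})" by (rule card_UN_le[OF fV])
  also have "\<dots> \<le> (\<Sum>v\<in>V. (2 * D) ^ card J)"
  proof (rule sum_mono)
    fix v assume "v \<in> V"
    then have v1: "v > 0" and v2: "v \<le> Nf ^ card J" unfolding V_def by auto
    have "real v \<le> real Nf ^ card J" using v2 by (metis of_nat_le_iff of_nat_power)
    also have "\<dots> \<le> N ^ card J" using NfN by (intro power_mono) auto
    also have "\<dots> \<le> N ^ D" using N4 JD by (intro power_increasing) auto
    finally have vN: "real v \<le> N ^ D" .
    show "card {t\<in>X. px t dvd v} \<le> (2 * D) ^ card J"
      unfolding X_def px_def by (rule card_dvd_tuples[OF _ N4 v1 vN J]) (use P in blast)
  qed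
  also have "\<dots> = card V * (2 * D) ^ card J" by simp
  also have "\<dots> \<le> (Nf ^ card J div qn + 1) * (2 * D) ^ card J"
    using card_residue_le[OF q, of "Nf ^ card J" c] unfolding V_def by (intro mult_right_mono) auto
  finally show ?thesis unfolding px_def .
qed

lemma card_congruent_pairs:
  fixes P :: "nat set" and N :: real and Nf qn D :: nat and J :: "'i set"
  assumes P: "\<And>p. p \<in> P \<Longrightarrow> prime p \<and> N / 2 \<le> real p \<and> p \<le> Nf"
    and N4: "N \<ge> 4" and NfN: "real Nf \<le> N" and J: "finite J" and JD: "card J \<le> D"
    and q: "qn > 0"
  defines "X \<equiv> PiE J (\<lambda>_. P)"
  shows "card {(x, x'). x \<in> X \<and> x' \<in> X \<and> (\<Prod>i\<in>J. x i) mod qn = (\<Prod>i\<in>J. x' i) mod qn}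
           \<le> card X * ((Nf ^ card J div qn + 1) * (2 * D) ^ card J)"
proof -
  define px where "px x = (\<Prod>i\<in>J. x i)" for x :: "'i \<Rightarrow> nat"
  define K where "K = (Nf ^ card J div qn + 1) * (2 * D) ^ card J"
  have "P \<subseteq> {..Nf}" using P by auto
  then have fX: "finite X" unfolding X_def using J by (intro finite_PiE) (auto intro: finite_subset)
  have "{(x, x'). x \<in> X \<and> x' \<in> X \<and> (\<Prod>i\<in>J. x i) mod qn = (\<Prod>i\<in>J. x' i) mod qn}
        = (\<Union>x\<in>X. Pair x ` {x'\<in>X. px x' mod qn = px x mod qn})"
    unfolding px_def by auto
  then have "card {(x, x'). x \<in> X \<and> x' \<in> X \<and> (\<Prod>i\<in>J. x i) mod qn = (\<Prod>i\<in>J. x' i) mod qn}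
        \<le> (\<Sum>x\<in>X. card (Pair x ` {x'\<in>X. px x' mod qn = px x mod qn}))"
    using card_UN_le[OF fX] by simp
  also have "\<dots> \<le> (\<Sum>x\<in>X. K)"
  proof (rule sum_mono)
    fix x
    have "card (Pair x ` {x'\<in>X. px x' mod qn = px x mod qn}) \<le> card {x'\<in>X. px x' mod qn = px x mod qn}"
      by (rule card_image_le) (use fX in simp)
    also have "\<dots> \<le> K"
      unfolding K_def px_def X_def by (rule card_tuples_in_residue_class[OF P N4 NfN J JD q])
    finally show "card (Pair x ` {x'\<in>X. px x' mod qn = px x mod qn}) \<le> K" .
  qed
  also have "\<dots> = card X * K" by simp
  finally show ?thesis unfolding K_def .
qed

lemma prod_char_sum_mean_square_le:
  fixes P :: "nat set" and N :: real and Nf qn D :: nat and J :: "'i set"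
  assumes P: "\<And>p. p \<in> P \<Longrightarrow> prime p \<and> N / 2 \<le> real p \<and> p \<le> Nf"
    and N4: "N \<ge> 4" and NfN: "real Nf \<le> N" and J: "finite J" and JD: "card J \<le> D"
    and q: "qn > 0" and cop: "coprime a (int qn)"
  defines "X \<equiv> PiE J (\<lambda>_. P)"
  shows "(\<Sum>m<qn. (norm (prod_char_sum a (int qn) X J m))^2)
         \<le> real qn * (real (card X) * real (Nf ^ card J div qn + 1) * real ((2 * D) ^ card J))"
proof -
  have "P \<subseteq> {..Nf}" using P by auto
  then have "finite X" unfolding X_def using J by (intro finite_PiE) (auto intro: finite_subset)
  then have "(\<Sum>m<qn. (norm (prod_char_sum a (int qn) X J m))^2)
        = real qn * real (card {(x, x'). x \<in> X \<and> x' \<in> X \<and> (\<Prod>i\<in>J. x i) mod qn = (\<Prod>i\<in>J. x' i) mod qn})"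
    by (rule prod_char_sum_mean_square[OF q cop])
  also have "\<dots> \<le> real qn * (real (card X) * real (Nf ^ card J div qn + 1) * real ((2 * D) ^ card J))"
    using card_congruent_pairs[OF P N4 NfN J JD q] unfolding X_def
    by (intro mult_left_mono) (simp_all only: of_nat_mult[symmetric] of_nat_le_iff mult.assoc of_nat_0_le_iff)
  finally show ?thesis .
qed

lemma prime_window:
  fixes N :: real and q :: int
  assumes N0: "N \<ge> 0"
  defines "P \<equiv> {p::nat. prime p \<and> N / 2 \<le> real p \<and> real p \<le> N \<and> \<not> int p dvd q}"
  shows "\<And>p. p \<in> P \<Longrightarrow> prime p \<and> N / 2 \<le> real p \<and> p \<le> nat \<lfloor>N\<rfloor>"
    and "finite P" and "card P \<le> nat \<lfloor>N\<rfloor>" and "real (nat \<lfloor>N\<rfloor>) \<le> N"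
proof -
  show Pp: "\<And>p. p \<in> P \<Longrightarrow> prime p \<and> N / 2 \<le> real p \<and> p \<le> nat \<lfloor>N\<rfloor>"
    unfolding P_def by (auto simp: le_nat_iff le_floor_iff)
  have sub: "P \<subseteq> {1..nat \<lfloor>N\<rfloor>}"
    using Pp prime_gt_0_nat by (fastforce simp: Suc_le_eq)
  show "finite P" using sub by (rule finite_subset) simp
  show "card P \<le> nat \<lfloor>N\<rfloor>" using card_mono[OF _ sub] by simp
  show "real (nat \<lfloor>N\<rfloor>) \<le> N" using N0 by linarith
qed

lemma trivial_bound:
  fixes N :: real and P :: "nat set"
  assumes cP: "real (card P) \<le> N"
  shows "(\<Sum>l = 1..L. norm (\<Sum>qs \<in> PiE {..<n} (\<lambda>_. P). e (f l qs))) \<le> real L * N ^ n"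
proof -
  have "norm (\<Sum>qs \<in> PiE {..<n} (\<lambda>_. P). e (f l qs)) \<le> N ^ n" for l
  proof -
    have "norm (\<Sum>qs \<in> PiE {..<n} (\<lambda>_. P). e (f l qs)) \<le> (\<Sum>qs \<in> PiE {..<n} (\<lambda>_. P). norm (e (f l qs)))"
      by (rule norm_sum)
    also have "\<dots> = real (card P) ^ n" by (simp add: norm_e card_PiE)
    also have "\<dots> \<le> N ^ n" using cP by (intro power_mono) auto
    finally show ?thesis .
  qed
  then have "(\<Sum>l = 1..L. norm (\<Sum>qs \<in> PiE {..<n} (\<lambda>_. P). e (f l qs))) \<le> (\<Sum>l = 1..L. N ^ n)"
    by (intro sum_mono)
  then show ?thesis by simp
qed

(* When n \<le> k the trivial bound already lies below the right-hand side of the theorem,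
   because N^n \<le> N^((n+k)/2). *)
lemma large_k_bound:
  fixes N :: real and P :: "nat set" and n k L :: nat
  assumes cP: "real (card P) \<le> N" and kn: "n \<le> k" and N1: "N \<ge> 1" and n0: "n > 0"
  shows "(\<Sum>l = 1..L. norm (\<Sum>qs \<in> PiE {..<n} (\<lambda>_. P). e (f l qs)))
         \<le> 2 * 2 ^ (n + k) * real n ^ n * max (real L * N powr (real n / 2 + real k / 2)) Y"
proof -
  define B where "B = max (real L * N powr (real n / 2 + real k / 2)) Y"
  have "N ^ n = N powr real n" using N1 by (simp add: powr_realpow)
  also have "\<dots> \<le> N powr (real n / 2 + real k / 2)" using kn N1 by (intro powr_mono) auto
  finally have Nn: "N ^ n \<le> N powr (real n / 2 + real k / 2)" .
  have "(1::real) * 1 \<le> 2 ^ (n + k) * real n ^ n"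
    using n0 by (intro mult_mono) (simp_all add: one_le_power)
  then have c1: "1 \<le> 2 * 2 ^ (n + k) * real n ^ n" by simp
  have B0: "0 \<le> B" unfolding B_def by (simp add: le_max_iff_disj)
  have "(\<Sum>l = 1..L. norm (\<Sum>qs \<in> PiE {..<n} (\<lambda>_. P). e (f l qs))) \<le> real L * N ^ n"
    by (rule trivial_bound[OF cP])
  also have "\<dots> \<le> real L * N powr (real n / 2 + real k / 2)"
    using Nn by (rule mult_left_mono) simp
  also have "\<dots> \<le> B" unfolding B_def by simp
  also have "\<dots> \<le> 2 * 2 ^ (n + k) * real n ^ n * B"
    using mult_right_mono[OF c1 B0] by simp
  finally show ?thesis unfolding B_def .
qed

lemma prime_sum_split:
  fixes a q :: int and P :: "nat set" and k n :: nat
  assumes "k \<le> n"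
  shows "(\<Sum>qs \<in> PiE {..<n} (\<lambda>_. P). e (real_of_int (int l * (\<Prod>i<n. int (qs i)) * a) / real_of_int q))
       = (\<Sum>y \<in> PiE {..<k} (\<lambda>_. P).
            prod_char_sum a q (PiE {k..<n} (\<lambda>_. P)) {k..<n} (l * (\<Prod>i<k. y i)))"
proof -
  define I where "I = {..<k}"
  define J where "J = {k..<n}"
  have IJ: "I \<inter> J = {}" "{..<n} = I \<union> J" "finite I" "finite J"
    unfolding I_def J_def using assms by auto
  have "(\<Sum>qs \<in> PiE {..<n} (\<lambda>_. P). e (real_of_int (int l * (\<Prod>i<n. int (qs i)) * a) / real_of_int q))
      = (\<Sum>y\<in>PiE I (\<lambda>_. P). \<Sum>x\<in>PiE J (\<lambda>_. P).
           e (real_of_int (int l * (\<Prod>i\<in>I \<union> J. int (merge I J (y, x) i)) * a) / real_of_int q))"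
    unfolding IJ(2) by (rule sum_PiE_merge[OF IJ(1)])
  also have "\<dots> = (\<Sum>y\<in>PiE I (\<lambda>_. P). prod_char_sum a q (PiE J (\<lambda>_. P)) J (l * (\<Prod>i\<in>I. y i)))"
    unfolding prod_char_sum_def
  proof (intro sum.cong refl)
    fix y x
    have "(\<Prod>i\<in>I \<union> J. int (merge I J (y, x) i)) = int (\<Prod>i\<in>I \<union> J. merge I J (y, x) i)" by simp
    also have "\<dots> = int (\<Prod>i\<in>I. y i) * int (\<Prod>i\<in>J. x i)"
      using prod_merge[OF IJ(1) IJ(3) IJ(4), of y x] by simp
    finally have prod_eq: "int l * (\<Prod>i\<in>I \<union> J. int (merge I J (y, x) i)) * a
                         = int (l * (\<Prod>i\<in>I. y i)) * int (\<Prod>i\<in>J. x i) * a"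
      by (simp add: mult.assoc)
    show "e (real_of_int (int l * (\<Prod>i\<in>I \<union> J. int (merge I J (y, x) i)) * a) / real_of_int q) =
          e (real_of_int (int (l * (\<Prod>i\<in>I. y i)) * int (\<Prod>i\<in>J. x i) * a) / real_of_int q)"
      by (simp only: prod_eq)
  qed
  finally show ?thesis unfolding I_def J_def .
qed

(* Fibres of (l, y) \<mapsto> l y_1\<cdots>y_k: y determines l, and y_1\<cdots>y_k divides the value m. *)
lemma card_product_fibre_le:
  fixes P :: "nat set" and N :: real and I :: "'i set"
  assumes P: "\<And>p. p \<in> P \<Longrightarrow> prime p \<and> N / 2 \<le> real p" and fP: "finite P" and N4: "N \<ge> 4"
    and I: "finite I" and m: "m > 0" "real m \<le> N ^ D"
  shows "card {z \<in> {1..L} \<times> PiE I (\<lambda>_. P). fst z * (\<Prod>i\<in>I. snd z i) = m} \<le> (2 * D) ^ card I"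
proof -
  define Fm where "Fm = {z \<in> {1..L} \<times> PiE I (\<lambda>_. P). fst z * (\<Prod>i\<in>I. snd z i) = m}"
  define Dm where "Dm = {y \<in> PiE I (\<lambda>_. P). (\<Prod>i\<in>I. y i) dvd m}"
  have pos: "(\<Prod>i\<in>I. y i) > 0" if "y \<in> PiE I (\<lambda>_. P)" for y
    using P PiE_mem[OF that] by (intro prod_pos) (auto simp: prime_gt_0_nat)
  have "inj_on snd Fm"
  proof (rule inj_onI)
    fix z z' assume z: "z \<in> Fm" and z': "z' \<in> Fm" and s: "snd z = snd z'"
    then have eq: "fst z * (\<Prod>i\<in>I. snd z i) = fst z' * (\<Prod>i\<in>I. snd z i)"
      unfolding Fm_def by simp
    have "snd z \<in> PiE I (\<lambda>_. P)" using z unfolding Fm_def by auto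
    then have "(\<Prod>i\<in>I. snd z i) > 0" by (rule pos)
    then have "fst z = fst z'" using eq by simp
    then show "z = z'" using s by (simp add: prod_eq_iff)
  qed
  moreover have "snd ` Fm \<subseteq> Dm" unfolding Fm_def Dm_def by auto
  moreover have "finite Dm" unfolding Dm_def by (rule finite_subset[OF _ finite_PiE[OF I fP]]) auto
  ultimately have "card Fm \<le> card Dm" by (metis card_image card_mono)
  also have "\<dots> \<le> (2 * D) ^ card I" unfolding Dm_def by (rule card_dvd_tuples[OF P N4 m I])
  finally show ?thesis unfolding Fm_def .
qed

lemma prime_sum_le_fibre_sum:
  fixes a q :: int and P :: "nat set" and k n L :: nat
  assumes "k \<le> n"
  shows "(\<Sum>l = 1..L. norm (\<Sum>qs \<in> PiE {..<n} (\<lambda>_. P).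
            e (real_of_int (int l * (\<Prod>i<n. int (qs i)) * a) / real_of_int q)))
       \<le> (\<Sum>z \<in> {1..L} \<times> PiE {..<k} (\<lambda>_. P).
            norm (prod_char_sum a q (PiE {k..<n} (\<lambda>_. P)) {k..<n} (fst z * (\<Prod>i<k. snd z i))))"
proof -
  have "(\<Sum>l = 1..L. norm (\<Sum>qs \<in> PiE {..<n} (\<lambda>_. P).
            e (real_of_int (int l * (\<Prod>i<n. int (qs i)) * a) / real_of_int q)))
      = (\<Sum>l = 1..L. norm (\<Sum>y \<in> PiE {..<k} (\<lambda>_. P).
            prod_char_sum a q (PiE {k..<n} (\<lambda>_. P)) {k..<n} (l * (\<Prod>i<k. y i))))"
    by (simp only: prime_sum_split[OF assms])
  also have "\<dots> \<le> (\<Sum>l = 1..L. \<Sum>y \<in> PiE {..<k} (\<lambda>_. P).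
            norm (prod_char_sum a q (PiE {k..<n} (\<lambda>_. P)) {k..<n} (l * (\<Prod>i<k. y i))))"
    by (intro sum_mono norm_sum)
  also have "\<dots> = (\<Sum>z \<in> {1..L} \<times> PiE {..<k} (\<lambda>_. P).
            norm (prod_char_sum a q (PiE {k..<n} (\<lambda>_. P)) {k..<n} (fst z * (\<Prod>i<k. snd z i))))"
    by (simp add: sum.cartesian_product split_def)
  finally show ?thesis .
qed

lemma fibre_sum_sq_le:
  fixes P :: "nat set" and N :: real and Nf qn k n L :: nat
  assumes Pp: "\<And>p. p \<in> P \<Longrightarrow> prime p \<and> N / 2 \<le> real p \<and> p \<le> Nf" and fP: "finite P"
    and N4: "N \<ge> 4" and NfN: "real Nf \<le> N" and MN: "real (L * Nf ^ k) \<le> N ^ (n + k)"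
    and qn0: "qn > 0" and cop: "coprime a (int qn)"
  defines "Z \<equiv> {1..L} \<times> PiE {..<k} (\<lambda>_. P)" and "X \<equiv> PiE {k..<n} (\<lambda>_. P)"
  shows "(\<Sum>z\<in>Z. norm (prod_char_sum a (int qn) X {k..<n} (fst z * (\<Prod>i<k. snd z i))))^2
         \<le> real (card Z) * real ((2 * (n + k)) ^ k) * real (L * Nf ^ k div qn + 1)
           * (real qn * (real (card X) * real (Nf ^ (n - k) div qn + 1) * real ((2 * (n + k)) ^ (n - k))))"
proof -
  define h where "h m = norm (prod_char_sum a (int qn) X {k..<n} m)" for m
  define f where "f z = fst z * (\<Prod>i<k. snd z i)" for z :: "nat \<times> (nat \<Rightarrow> nat)"
  define M where "M = L * Nf ^ k"
  have range: "f ` Z \<subseteq> {1..M}"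
  proof
    fix m assume "m \<in> f ` Z"
    then obtain l y where ly: "l \<in> {1..L}" "y \<in> PiE {..<k} (\<lambda>_. P)" "m = l * (\<Prod>i<k. y i)"
      unfolding Z_def f_def by auto
    have "1 \<le> (\<Prod>i<k. y i)" "(\<Prod>i<k. y i) \<le> Nf ^ k"
      using prime_tuple_prod_range[OF ly(2)] Pp by auto
    then show "m \<in> {1..M}" using ly unfolding M_def by (auto intro: mult_le_mono)
  qed
  have fibres: "card {z\<in>Z. f z = m} \<le> (2 * (n + k)) ^ k" if m: "m \<in> {1..M}" for m
  proof -
    have "real m \<le> N ^ (n + k)" using m MN unfolding M_def by (meson atLeastAtMost_iff of_nat_le_iff order_trans)
    then have "card {z \<in> {1..L} \<times> PiE {..<k} (\<lambda>_. P). fst z * (\<Prod>i<k. snd z i) = m}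
               \<le> (2 * (n + k)) ^ card {..<k}"
      using m by (intro card_product_fibre_le[OF _ fP N4]) (use Pp in auto)
    then show ?thesis unfolding Z_def f_def by simp
  qed
  have CS: "(\<Sum>z\<in>Z. h (f z))^2 \<le> real (card Z) * real ((2 * (n + k)) ^ k) * real (M div qn + 1) * (\<Sum>m<qn. (h m)^2)"
  proof (rule sum_periodic_cauchy_schwarz[OF _ range fibres _ qn0])
    show "finite Z" unfolding Z_def using fP by (simp add: finite_PiE)
    show "h (m + qn) = h m" for m unfolding h_def by (simp only: prod_char_sum_periodic[OF qn0])
  qed
  have MS: "(\<Sum>m<qn. (h m)^2)
            \<le> real qn * (real (card X) * real (Nf ^ (n - k) div qn + 1) * real ((2 * (n + k)) ^ (n - k)))"
  proof -
    have JD: "card {k..<n} \<le> n + k" by simp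
    show ?thesis
      using prod_char_sum_mean_square_le[OF Pp N4 NfN finite_atLeastLessThan JD qn0 cop]
      unfolding h_def X_def by simp
  qed
  show ?thesis
    using order_trans[OF CS mult_left_mono[OF MS]] unfolding h_def f_def M_def by simp
qed

lemma mult4_mono:
  fixes a b c d a' b' c' d' :: real
  assumes "0 \<le> a" "a \<le> a'" "0 \<le> b" "b \<le> b'" "0 \<le> c" "c \<le> c'" "0 \<le> d" "d \<le> d'"
  shows "a * b * c * d \<le> a' * b' * c' * d'"
  using assms by (intro mult_mono) (auto intro: order_trans)

lemma bilinear_bound_sq:
  fixes a q :: int and n k L :: nat and N :: real
  assumes q1: "q \<ge> 1" and g: "gcd a q = 1" and kn: "k < n"
    and N4: "N \<ge> 4" and LN: "real L \<le> N ^ n" and qLN: "real_of_int q \<le> real L * N ^ k"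
  defines "P \<equiv> {p::nat. prime p \<and> N / 2 \<le> real p \<and> real p \<le> N \<and> \<not> int p dvd q}"
  shows "(\<Sum>l = 1..L. norm (\<Sum>qs \<in> PiE {..<n} (\<lambda>_. P).
           e (real_of_int (int l * (\<Prod>i<n. int (qs i)) * a) / real_of_int q)))^2
       \<le> 2 * (2 * real (n + k)) ^ n * (real L * N ^ k)^2
           * (N ^ (n - k) * (N ^ (n - k) / real_of_int q + 1))"
proof -
  have N0: "0 \<le> N" using N4 by simp
  define Nf where "Nf = nat \<lfloor>N\<rfloor>"
  have Pp: "\<And>p. p \<in> P \<Longrightarrow> prime p \<and> N / 2 \<le> real p \<and> p \<le> Nf" and fP: "finite P"
    and cP: "card P \<le> Nf" and NfN: "real Nf \<le> N"
    using prime_window[OF N0] unfolding P_def Nf_def by blast+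
  define qn where "qn = nat q"
  define j where "j = n - k"
  define Z where "Z = {1..L} \<times> PiE {..<k} (\<lambda>_. P)"
  define X where "X = PiE {k..<n} (\<lambda>_. P)"
  define A where "A = (\<Sum>l = 1..L. norm (\<Sum>qs \<in> PiE {..<n} (\<lambda>_. P).
           e (real_of_int (int l * (\<Prod>i<n. int (qs i)) * a) / real_of_int q)))"
  have qnq: "int qn = q" and qn0: "qn > 0" unfolding qn_def using q1 by auto
  have rq: "real qn = real_of_int q" using qnq by (metis of_int_of_nat_eq)
  have cop: "coprime a (int qn)" using g qnq by (simp add: coprime_iff_gcd_eq_1)
  have NfN_pow: "real Nf ^ i \<le> N ^ i" for i using NfN by (intro power_mono) auto
  have cardP_pow: "real (card P) ^ i \<le> N ^ i" for i
    using cP NfN_pow[of i] by (meson of_nat_0_le_iff of_nat_le_iff power_mono order_trans)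
  have MN: "real (L * Nf ^ k) \<le> real L * N ^ k" using NfN_pow[of k] by (simp add: mult_left_mono)
  also have "\<dots> \<le> N ^ n * N ^ k" using LN N4 by (intro mult_right_mono) auto
  finally have MNk: "real (L * Nf ^ k) \<le> N ^ (n + k)" by (simp add: power_add)
  have "A^2 \<le> (\<Sum>z\<in>Z. norm (prod_char_sum a (int qn) X {k..<n} (fst z * (\<Prod>i<k. snd z i))))^2"
    using prime_sum_le_fibre_sum[OF less_imp_le[OF kn], where L = L and P = P and a = a and q = q] unfolding A_def Z_def X_def qnq
    by (intro power_mono) (auto intro: sum_nonneg)
  also have "\<dots> \<le> real ((2 * (n + k)) ^ k) * real ((2 * (n + k)) ^ j) * real (card Z)
                  * (real (L * Nf ^ k div qn + 1) * real qn) * (real (card X) * real (Nf ^ j div qn + 1))"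
    using fibre_sum_sq_le[OF Pp fP N4 NfN MNk qn0 cop] unfolding Z_def X_def j_def
    by (simp add: mult_ac)
  also have "\<dots> \<le> (2 * real (n + k)) ^ n * (real L * N ^ k) * (2 * (real L * N ^ k))
                  * (N ^ j * (N ^ j / real_of_int q + 1))"
  proof (rule mult4_mono)
    show "real ((2 * (n + k)) ^ k) * real ((2 * (n + k)) ^ j) \<le> (2 * real (n + k)) ^ n"
      unfolding j_def using kn by (simp add: power_add[symmetric])
    show "real (card Z) \<le> real L * N ^ k"
      unfolding Z_def using cardP_pow[of k] by (simp add: card_cartesian_product card_PiE mult_left_mono)
    have "(L * Nf ^ k div qn + 1) * qn \<le> L * Nf ^ k + qn" by (simp add: add_mult_distrib)
    then have "real (L * Nf ^ k div qn + 1) * real qn \<le> real (L * Nf ^ k) + real qn"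
      by (simp only: of_nat_mult[symmetric])
    then show "real (L * Nf ^ k div qn + 1) * real qn \<le> 2 * (real L * N ^ k)"
      using MN qLN rq by linarith
    have "real (Nf ^ j div qn) \<le> real (Nf ^ j) / real qn" by (rule of_nat_div_le_of_nat)
    also have "\<dots> \<le> N ^ j / real qn" using NfN_pow[of j] by (simp add: divide_right_mono)
    finally have "real (Nf ^ j div qn + 1) \<le> N ^ j / real_of_int q + 1" unfolding rq by simp
    moreover have "real (card X) \<le> N ^ j" unfolding X_def j_def using cardP_pow by (simp add: card_PiE)
    ultimately show "real (card X) * real (Nf ^ j div qn + 1) \<le> N ^ j * (N ^ j / real_of_int q + 1)"
      by (intro mult_mono) auto
  qed (use N4 in auto)
  also have "\<dots> = 2 * (2 * real (n + k)) ^ n * (real L * N ^ k)^2 * (N ^ j * (N ^ j / real_of_int q + 1))"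
    by (simp only: power2_eq_square mult_ac)
  finally show ?thesis unfolding A_def j_def .
qed

lemma mixed_power_le:
  fixes n k :: nat
  assumes "k \<le> n"
  shows "(2 * real (n + k)) ^ n \<le> 4 ^ (n + k) * (real n ^ n)^2"
proof (cases "n = 0")
  case False
  then have nn1: "1 \<le> real n ^ n" by (simp add: one_le_power)
  have "(2 * real (n + k)) ^ n \<le> (4 * real n) ^ n" using assms by (intro power_mono) auto
  also have "\<dots> = 4 ^ n * real n ^ n" by (simp add: power_mult_distrib)
  also have "\<dots> \<le> 4 ^ (n + k) * (real n ^ n)^2"
    using nn1 by (intro mult_mono power_increasing) (auto simp: power2_eq_square mult_le_cancel_left1)
  finally show ?thesis .
qed (use assms in simp)

(* Arithmetic: the squared bound yields the claimed bound with C = 2, since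
   (2(n+k))^n \<le> 4^(n+k) (n^n)^2 and both terms are dominated by the square of the max. *)
lemma square_bound_to_max:
  fixes A N qr :: real and n k L :: nat
  assumes kn: "k < n" and N1: "N \<ge> 1" and qpos: "qr > 0"
    and sq: "A^2 \<le> 2 * (2 * real (n + k)) ^ n * (real L * N ^ k)^2 * (N ^ (n - k) * (N ^ (n - k) / qr + 1))"
  shows "A \<le> 2 * 2 ^ (n + k) * real n ^ n
              * max (real L * N powr (real n / 2 + real k / 2)) (real L * N ^ n / sqrt qr)"
proof -
  define B where "B = max (real L * N powr (real n / 2 + real k / 2)) (real L * N ^ n / sqrt qr)"
  define c where "c = 2 * (2::real) ^ (n + k) * real n ^ n"
  define w where "w = N ^ (n - k)"
  define Lu where "Lu = real L * N ^ k"
  have Npos: "N > 0" using N1 by simp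
  have B0: "0 \<le> B" unfolding B_def by (simp add: le_max_iff_disj)
  have Nn: "N ^ n = N ^ k * w" unfolding w_def using kn by (simp add: power_add[symmetric])
  have b1: "Lu^2 * w \<le> B^2"
  proof -
    have "(N powr (real n / 2 + real k / 2))^2 = N powr real (n + k)"
      by (simp add: power2_eq_square powr_add[symmetric])
    also have "\<dots> = N ^ (n + k)" using Npos by (rule powr_realpow)
    also have "\<dots> = N ^ k * N ^ k * w" using Nn by (simp add: power_add)
    finally have "(real L * N powr (real n / 2 + real k / 2))^2 = Lu^2 * w"
      unfolding Lu_def by (simp add: power_mult_distrib power2_eq_square)
    moreover have "(real L * N powr (real n / 2 + real k / 2))^2 \<le> B^2"
      unfolding B_def by (intro power_mono) auto
    ultimately show ?thesis by simp
  qed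
  have b2: "Lu^2 * w^2 / qr \<le> B^2"
  proof -
    have "(real L * N ^ n / sqrt qr)^2 = Lu^2 * w^2 / qr"
      unfolding Lu_def Nn using qpos by (simp add: power_divide power_mult_distrib)
    moreover have "(real L * N ^ n / sqrt qr)^2 \<le> B^2"
      unfolding B_def using qpos Npos by (intro power_mono) auto
    ultimately show ?thesis by simp
  qed
  have cnk: "(2 * real (n + k)) ^ n \<le> 4 ^ (n + k) * (real n ^ n)^2"
    using kn by (intro mixed_power_le) simp
  have "A^2 \<le> 2 * (2 * real (n + k)) ^ n * (Lu^2 * w^2 / qr + Lu^2 * w)"
    using sq qpos unfolding Lu_def w_def by (simp add: field_simps power2_eq_square)
  also have "\<dots> \<le> 2 * (2 * real (n + k)) ^ n * (2 * B^2)"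
    using b1 b2 by (intro mult_left_mono) auto
  also have "\<dots> = 4 * (2 * real (n + k)) ^ n * B^2" by simp
  also have "\<dots> \<le> 4 * (4 ^ (n + k) * (real n ^ n)^2) * B^2"
    using cnk by (intro mult_right_mono mult_left_mono) simp_all
  also have "\<dots> = (c * B)^2"
  proof -
    have four: "(4::real) ^ (n + k) = 2 ^ (n + k) * 2 ^ (n + k)"
      by (simp flip: power_mult_distrib)
    show ?thesis unfolding c_def four power2_eq_square by (simp add: mult_ac)
  qed
  finally have "A^2 \<le> (c * B)^2" .
  moreover have "0 \<le> c * B" unfolding c_def using B0 by simp
  ultimately have "A \<le> c * B" by (rule power2_le_imp_le)
  then show ?thesis unfolding c_def B_def .
qed

theorem lemma1:
  "\<exists>C>0. \<forall>(a::int) (q::int) (n::nat) (k::nat) (L::nat) (N::real).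
     q \<ge> 1 \<longrightarrow> gcd a q = 1 \<longrightarrow> n > 0 \<longrightarrow> k > 0 \<longrightarrow> L > 0 \<longrightarrow> N \<ge> 1 \<longrightarrow>
     real L \<le> N ^ n \<longrightarrow> real_of_int q \<le> real L * N ^ k \<longrightarrow> 2 ^ (n + k + 1) < N \<longrightarrow>
     (let P = {p::nat. prime p \<and> N / 2 \<le> real p \<and> real p \<le> N \<and> \<not> int p dvd q} in
       (\<Sum>l = 1..L. norm (\<Sum>qs \<in> PiE {..<n} (\<lambda>_. P).
           e (real_of_int (int l * (\<Prod>i<n. int (qs i)) * a) / real_of_int q)))
       \<le> C * 2 ^ (n + k) * real n ^ n *
           max (real L * N powr (real n / 2 + real k / 2)) (real L * N ^ n / sqrt (real_of_int q)))"
proof (rule exI[of _ "2::real"], intro conjI allI impI)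
  show "(2::real) > 0" by simp
  fix a q :: int and n k L :: nat and N :: real
  assume q1: "q \<ge> 1" and g: "gcd a q = 1" and n0: "n > 0" and "k > 0" and "L > 0"
    and N1: "N \<ge> 1" and LN: "real L \<le> N ^ n" and qLN: "real_of_int q \<le> real L * N ^ k"
    and N2: "2 ^ (n + k + 1) < N"
  define P where "P = {p::nat. prime p \<and> N / 2 \<le> real p \<and> real p \<le> N \<and> \<not> int p dvd q}"
  define A where "A = (\<Sum>l = 1..L. norm (\<Sum>qs \<in> PiE {..<n} (\<lambda>_. P).
           e (real_of_int (int l * (\<Prod>i<n. int (qs i)) * a) / real_of_int q)))"
  define B where "B = max (real L * N powr (real n / 2 + real k / 2)) (real L * N ^ n / sqrt (real_of_int q))"
  have N4: "N \<ge> 4"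
    using N2 power_increasing[of 2 "n + k + 1" "2::real"] n0 by simp
  have "A \<le> 2 * 2 ^ (n + k) * real n ^ n * B"
  proof (cases "k < n")
    case True
    have qpos: "real_of_int q > 0" using q1 by simp
    have "A^2 \<le> 2 * (2 * real (n + k)) ^ n * (real L * N ^ k)^2
                  * (N ^ (n - k) * (N ^ (n - k) / real_of_int q + 1))"
      unfolding A_def P_def by (rule bilinear_bound_sq[OF q1 g True N4 LN qLN])
    then show ?thesis unfolding B_def by (rule square_bound_to_max[OF True N1 qpos])
  next
    case False
    have N0: "0 \<le> N" using N4 by simp
    have "card P \<le> nat \<lfloor>N\<rfloor>" unfolding P_def by (rule prime_window(3)[OF N0])
    then have "real (card P) \<le> N" using prime_window(4)[OF N0] by linarith
    then show ?thesis unfolding A_def B_def using False n0 N1 by (intro large_k_bound) auto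
  qed
  then show "let P = {p::nat. prime p \<and> N / 2 \<le> real p \<and> real p \<le> N \<and> \<not> int p dvd q} in
       (\<Sum>l = 1..L. norm (\<Sum>qs \<in> PiE {..<n} (\<lambda>_. P).
           e (real_of_int (int l * (\<Prod>i<n. int (qs i)) * a) / real_of_int q)))
       \<le> 2 * 2 ^ (n + k) * real n ^ n *
           max (real L * N powr (real n / 2 + real k / 2)) (real L * N ^ n / sqrt (real_of_int q))"
    unfolding Let_def A_def B_def P_def .
qed

end
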